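(* For any locale $L$, the subset $M_L:=\bigcap_{a\in L}\mathfrak{o}(a^*\vee a^{**})$ is a dense extremally disconnected sublocale of $L$, and every dense extremally disconnected sublocale $S$ of $L$ satisfies $S\subseteq M_L$; i.e. $M_L$ is the largest dense extremally disconnected sublocale of $L$.
   Context: A frame (locale) $L$ is a complete lattice in which finite meets distribute over arbitrary joins; $a\to b$ denotes the Heyting implication and $a^*=a\to0$ the pseudocomplement. A sublocale of $L$ is a subset $S\subseteq L$ closed under arbitrary meets such that $a\to s\in S$ for all $a\in L$, $s\in S$; it is a frame under the inherited order. The open sublocale of $a\in L$ is $\mathfrak{o}(a)=\{a\to b\mid b\in L\}$. A sublocale $S$ is dense if $\bigwedge S=0$. A locale (frame) is extremally disconnected if $x^*\vee x^{**}=1$ for all its elements $x$ (pseudocomplements and joins computed in that frame). *)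

theory Defs
  imports Main
begin

definition frame_law :: "'a::complete_lattice itself \<Rightarrow> bool" where
  "frame_law _ \<longleftrightarrow> (\<forall>(a::'a) T. inf a (Sup T) = (SUP t\<in>T. inf a t))"

definition himp :: "'a::complete_lattice \<Rightarrow> 'a \<Rightarrow> 'a" where
  "himp a b = Sup {x. inf x a \<le> b}"

definition pcompl :: "'a::complete_lattice \<Rightarrow> 'a" where
  "pcompl a = himp a bot"

definition sublocale_of :: "'a::complete_lattice set \<Rightarrow> bool" where
  "sublocale_of S \<longleftrightarrow> (\<forall>T. T \<subseteq> S \<longrightarrow> Inf T \<in> S) \<and> (\<forall>a. \<forall>s\<in>S. himp a s \<in> S)"

definition open_sub :: "'a::complete_lattice \<Rightarrow> 'a set" where
  "open_sub a = {himp a b | b. True}"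

definition dense_sub :: "'a::complete_lattice set \<Rightarrow> bool" where
  "dense_sub S \<longleftrightarrow> Inf S = bot"

text \<open>Lattice operations of a subset S under the inherited order (meaningful for sublocales):
  joins, bottom, pseudocomplement computed in S.\<close>
definition sub_join :: "'a::complete_lattice set \<Rightarrow> 'a set \<Rightarrow> 'a" where
  "sub_join S T = Inf {s\<in>S. \<forall>t\<in>T. t \<le> s}"

definition sub_bot :: "'a::complete_lattice set \<Rightarrow> 'a" where
  "sub_bot S = Inf S"

definition sub_top :: "'a::complete_lattice set \<Rightarrow> 'a" where
  "sub_top S = sub_join S S"

definition sub_pcompl :: "'a::complete_lattice set \<Rightarrow> 'a \<Rightarrow> 'a" where
  "sub_pcompl S x = sub_join S {y\<in>S. inf y x = sub_bot S}"

definition ext_disconnected_sub :: "'a::complete_lattice set \<Rightarrow> bool" where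
  "ext_disconnected_sub S \<longleftrightarrow>
     (\<forall>x\<in>S. sub_join S {sub_pcompl S x, sub_pcompl S (sub_pcompl S x)} = sub_top S)"

definition M_L :: "'a::complete_lattice set" where
  "M_L = (\<Inter>a. open_sub (sup (pcompl a) (pcompl (pcompl a))))"

end

theory Submission
  imports Defs
begin

text \<open>
  For a sublocale \<open>S\<close> and any \<open>T\<close>, the join of \<open>T\<close> computed in \<open>S\<close> is \<open>1\<close> exactly when
  \<open>S \<subseteq> \<o>(\<Squnion>T)\<close>: if \<open>s \<in> S\<close>, then \<open>(\<Squnion>T \<rightarrow> s) \<rightarrow> s\<close> is an upper bound of \<open>T\<close> in \<open>S\<close>,
  so it is \<open>1\<close>, which forces \<open>\<Squnion>T \<rightarrow> s = s\<close>. A dense sublocale contains \<open>0\<close>, hence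
  computes pseudocomplements as \<open>L\<close> does, so it is extremally disconnected iff
  \<open>S \<subseteq> \<o>(x\<^sup>* \<squnion> x\<^sup>*\<^sup>*)\<close> for all \<open>x \<in> S\<close>. Taking \<open>x = a\<^sup>*\<^sup>*\<close> (so \<open>x\<^sup>* = a\<^sup>*\<close>) shows
  that such an \<open>S\<close> lies in \<open>M\<^sub>L\<close>. Conversely \<open>M\<^sub>L\<close> satisfies the condition by
  construction, is a sublocale as an intersection of open sublocales, and is dense
  because \<open>(a\<^sup>* \<squnion> a\<^sup>*\<^sup>*)\<^sup>* = 0\<close>.
\<close>

lemma sub_join_eqI:
  assumes "m \<in> S" "\<forall>t\<in>T. t \<le> m" "\<forall>s\<in>S. (\<forall>t\<in>T. t \<le> s) \<longrightarrow> m \<le> s"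
  shows "sub_join S T = m"
  unfolding sub_join_def using assms by (auto intro!: antisym Inf_lower Inf_greatest)

lemma eq_if_same_lower_bounds: "(\<And>x. x \<le> p \<longleftrightarrow> x \<le> q) \<Longrightarrow> p = (q::'a::order)"
  by (meson order.refl antisym)

lemma sublocale_of_Inter:
  assumes "\<And>S. S \<in> \<S> \<Longrightarrow> sublocale_of S"
  shows "sublocale_of (\<Inter>\<S>)"
  using assms unfolding sublocale_of_def by (simp add: subset_eq)

lemma top_mem_sublocale: "sublocale_of S \<Longrightarrow> top \<in> S"
  unfolding sublocale_of_def by (metis Inf_empty empty_subsetI)

lemma sub_top_sublocale: "sublocale_of S \<Longrightarrow> sub_top S = top"
  unfolding sub_top_def by (rule sub_join_eqI) (auto simp: top_mem_sublocale)

lemma dense_sub_iff_bot_mem: "sublocale_of S \<Longrightarrow> dense_sub S \<longleftrightarrow> bot \<in> S"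
  unfolding sublocale_of_def dense_sub_def by (metis Inf_lower bot_unique order.refl)

lemma pcompl_mem_sublocale: "sublocale_of S \<Longrightarrow> bot \<in> S \<Longrightarrow> pcompl x \<in> S"
  unfolding sublocale_of_def pcompl_def by blast

context
  assumes frame: "frame_law TYPE('a::complete_lattice)"
begin

lemma le_himp_iff: "(x::'a) \<le> himp a b \<longleftrightarrow> inf x a \<le> b"
proof
  assume "inf x a \<le> b"
  then show "x \<le> himp a b" unfolding himp_def by (auto intro: Sup_upper)
next
  assume "x \<le> himp a b"
  then have "inf x a \<le> inf a (himp a b)" by (simp add: le_infI1 le_infI2 inf_commute)
  also have "\<dots> = (SUP t\<in>{x. inf x a \<le> b}. inf a t)"
    using frame unfolding frame_law_def himp_def by blast
  also have "\<dots> \<le> b" by (auto intro!: SUP_least simp: inf_commute)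
  finally show "inf x a \<le> b" .
qed

lemma inf_himp_le: "inf (himp a b) a \<le> (b::'a)"
  by (simp add: le_himp_iff [symmetric])

lemma le_himp: "(b::'a) \<le> himp a b"
  by (simp add: le_himp_iff le_infI1)

lemma himp_eq_top_iff: "himp a b = (top::'a) \<longleftrightarrow> a \<le> b"
  using le_himp_iff [of top a b] by (simp add: top_unique)

lemma himp_himp_same: "himp c (himp c b) = himp c (b::'a)"
  by (rule eq_if_same_lower_bounds) (simp add: le_himp_iff inf_assoc)

lemma himp_left_commute: "himp a (himp c b) = himp c (himp a (b::'a))"
  by (rule eq_if_same_lower_bounds) (simp add: le_himp_iff ac_simps)

lemma himp_Inf: "himp c (Inf B) = Inf (himp c ` (B::'a set))"
  by (rule eq_if_same_lower_bounds) (simp add: le_himp_iff le_Inf_iff)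

lemma le_pcompl_iff: "(x::'a) \<le> pcompl a \<longleftrightarrow> inf x a = bot"
  unfolding pcompl_def by (simp add: le_himp_iff bot_unique)

lemma inf_pcompl_self: "inf (pcompl a) (a::'a) = bot"
  by (simp add: le_pcompl_iff [symmetric])

lemma le_pcompl_pcompl: "(a::'a) \<le> pcompl (pcompl a)"
  by (metis le_pcompl_iff inf_commute inf_pcompl_self)

lemma pcompl_antimono: "(a::'a) \<le> b \<Longrightarrow> pcompl b \<le> pcompl a"
  by (metis le_pcompl_iff inf_pcompl_self inf_mono order.refl bot_unique)

lemma pcompl_pcompl_pcompl: "pcompl (pcompl (pcompl a)) = pcompl (a::'a)"
  by (simp add: antisym pcompl_antimono le_pcompl_pcompl)

lemma pcompl_sup_pcompl_pcompl: "pcompl (sup (pcompl a) (pcompl (pcompl (a::'a)))) = bot"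
proof -
  let ?p = "pcompl (sup (pcompl a) (pcompl (pcompl a)))"
  have "?p \<le> pcompl (pcompl a)" "?p \<le> pcompl (pcompl (pcompl a))"
    by (simp_all add: pcompl_antimono)
  then have "?p \<le> inf (pcompl (pcompl a)) (pcompl a)" by (simp add: pcompl_pcompl_pcompl)
  then show ?thesis by (simp add: inf_pcompl_self bot_unique)
qed

lemma mem_open_sub_iff: "(s::'a) \<in> open_sub c \<longleftrightarrow> himp c s = s"
  unfolding open_sub_def by (auto simp: himp_himp_same) metis

lemma bot_mem_open_sub_iff: "bot \<in> open_sub c \<longleftrightarrow> pcompl (c::'a) = bot"
  by (simp add: mem_open_sub_iff pcompl_def)

lemma sublocale_of_open_sub: "sublocale_of (open_sub (c::'a))"
  unfolding sublocale_of_def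
proof (intro conjI allI impI ballI)
  fix T :: "'a set"
  assume "T \<subseteq> open_sub c"
  then show "Inf T \<in> open_sub c" by (simp add: mem_open_sub_iff himp_Inf subset_eq)
next
  fix a s :: 'a
  assume "s \<in> open_sub c"
  then show "himp a s \<in> open_sub c" by (metis mem_open_sub_iff himp_left_commute)
qed

lemma sub_pcompl_eq_pcompl:
  assumes "sublocale_of S" "dense_sub S" "(x::'a) \<in> S"
  shows "sub_pcompl S x = pcompl x"
  unfolding sub_pcompl_def sub_bot_def
proof (rule sub_join_eqI)
  have "bot \<in> S" using assms(1,2) dense_sub_iff_bot_mem by blast
  then show "pcompl x \<in> S" using assms(1) pcompl_mem_sublocale by blast
  then show "\<forall>s\<in>S. (\<forall>t\<in>{y \<in> S. inf y x = Inf S}. t \<le> s) \<longrightarrow> pcompl x \<le> s"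
    using assms(2) unfolding dense_sub_def by (simp add: inf_pcompl_self)
qed (use assms(2) in \<open>simp add: le_pcompl_iff dense_sub_def\<close>)

lemma sub_join_eq_top_iff_subset_open_sub:
  assumes "sublocale_of (S::'a set)"
  shows "sub_join S T = top \<longleftrightarrow> S \<subseteq> open_sub (Sup T)"
proof
  assume join_top: "sub_join S T = top"
  show "S \<subseteq> open_sub (Sup T)"
  proof
    fix s
    assume "s \<in> S"
    define t where "t = himp (Sup T) s"
    have "himp t s \<in> S" using \<open>s \<in> S\<close> assms unfolding sublocale_of_def by blast
    moreover have "Sup T \<le> himp t s"
      unfolding t_def le_himp_iff by (metis inf_commute inf_himp_le)
    ultimately have "sub_join S T \<le> himp t s"
      unfolding sub_join_def by (intro Inf_lower) (auto intro: order_trans Sup_upper)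
    then have "t \<le> s" using join_top himp_eq_top_iff top_unique by metis
    then show "s \<in> open_sub (Sup T)"
      using le_himp unfolding t_def mem_open_sub_iff by (blast intro: antisym)
  qed
next
  assume "S \<subseteq> open_sub (Sup T)"
  then have "s = top" if "s \<in> S" "\<forall>t\<in>T. t \<le> s" for s
    using that himp_eq_top_iff mem_open_sub_iff by (metis Sup_least subsetD)
  then show "sub_join S T = top"
    by (intro sub_join_eqI) (auto simp: top_mem_sublocale assms)
qed

lemma ext_disconnected_sub_iff:
  assumes "sublocale_of (S::'a set)" "dense_sub S"
  shows "ext_disconnected_sub S \<longleftrightarrow>
    (\<forall>x\<in>S. S \<subseteq> open_sub (sup (pcompl x) (pcompl (pcompl x))))"
proof -
  have "bot \<in> S" using assms dense_sub_iff_bot_mem by blast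
  then have "sub_pcompl S (sub_pcompl S x) = pcompl (pcompl x)" if "x \<in> S" for x
    using that assms pcompl_mem_sublocale sub_pcompl_eq_pcompl by metis
  then show ?thesis
    unfolding ext_disconnected_sub_def
    using assms sub_pcompl_eq_pcompl sub_top_sublocale sub_join_eq_top_iff_subset_open_sub
    by (metis Sup_insert Sup_empty sup_bot_right)
qed

end

theorem proposition4p2:
  assumes "frame_law TYPE('a::complete_lattice)"
  shows "sublocale_of (M_L :: 'a set) \<and> dense_sub (M_L :: 'a set) \<and> ext_disconnected_sub (M_L :: 'a set)
    \<and> (\<forall>S::'a set. sublocale_of S \<and> dense_sub S \<and> ext_disconnected_sub S \<longrightarrow> S \<subseteq> M_L)"
proof (intro conjI allI impI)
  show M_sublocale: "sublocale_of (M_L :: 'a set)"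
    unfolding M_L_def by (auto intro: sublocale_of_Inter sublocale_of_open_sub [OF assms])
  have "(bot::'a) \<in> M_L"
    by (simp add: M_L_def bot_mem_open_sub_iff [OF assms] pcompl_sup_pcompl_pcompl [OF assms])
  then show M_dense: "dense_sub (M_L :: 'a set)"
    using dense_sub_iff_bot_mem M_sublocale by blast
  show "ext_disconnected_sub (M_L :: 'a set)"
    unfolding ext_disconnected_sub_iff [OF assms M_sublocale M_dense] by (auto simp: M_L_def)
  fix S :: "'a set"
  assume S: "sublocale_of S \<and> dense_sub S \<and> ext_disconnected_sub S"
  have "S \<subseteq> open_sub (sup (pcompl a) (pcompl (pcompl a)))" for a
  proof -
    have "pcompl (pcompl a) \<in> S"
      using S pcompl_mem_sublocale dense_sub_iff_bot_mem by blast
    then show ?thesis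
      using S ext_disconnected_sub_iff [OF assms] pcompl_pcompl_pcompl [OF assms]
      by (metis sup_commute)
  qed
  then show "S \<subseteq> M_L" unfolding M_L_def by blast
qed

end
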